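(* Let $\psi\in C^1((0,\infty))$ be concave with $\psi'(1)=1$ and $H_\psi<\infty$, let $d>0$, and let $G=(V,E)$ be a finite connected graph satisfying $CD\psi(d,0)$. Then for every positive solution $u$ to the heat equation on $G$, all $x_1,x_2\in V$ and all $0<T_1<T_2$, \[ \log\frac{u(x_1,T_1)}{u(x_2,T_2)}\le\frac d2\log\frac{T_2}{T_1}+\frac{H_\psi\,\mathrm{dist}(x_1,x_2)^2}{T_2-T_1}. \]
   Context: A finite graph $G=(V,E)$: finite set $V$, irreflexive symmetric relation $E$; $v\sim w$ iff $(v,w)\in E$; $\mathrm{dist}$ is the combinatorial path distance; connected means all distances are finite. $C^+(V)$: positive functions. Laplacian $\Delta f(v)=\sum_{w\sim v}(f(w)-f(v))$. For $f\in C^+(V)$: $(\Delta^\psi f)(v):=\Delta\big[\psi\big(\tfrac{f}{f(v)}\big)\big](v)$; $(\Omega^\psi f)(v):=\Delta\Big[\psi'\big(\tfrac{f}{f(v)}\big)\cdot\tfrac{f}{f(v)}\cdot\big(\tfrac{\Delta f}{f}-\tfrac{(\Delta f)(v)}{f(v)}\big)\Big](v)$; $2\Gamma_2^\psi(f):=\Omega^\psi f+\frac{\Delta f\,\Delta^\psi f}{f}-\frac{\Delta(f\,\Delta^\psi f)}{f}$. $CD\psi(d,0)$: $\Gamma_2^\psi(f)\ge\frac1d(\Delta^\psi f)^2$ for all $f\in C^+(V)$. $\overline{\psi}(x):=\psi'(1)(x-1)-(\psi(x)-\psi(1))$, $H_\psi:=\sup_{x>1}\frac{(\log x)^2}{\overline{\psi}(x)}$.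 A solution to the heat equation is $u:V\times[0,\infty)\to\mathbb{R}$, continuously differentiable in $t$, with $\Delta u=\partial_tu$. *)

theory Defs
  imports "HOL-Analysis.Analysis"
begin

definition finite_graph :: "'a set \<Rightarrow> ('a \<Rightarrow> 'a \<Rightarrow> bool) \<Rightarrow> bool" where
  "finite_graph V E \<longleftrightarrow> finite V \<and> (\<forall>v w. E v w \<longrightarrow> v \<in> V \<and> w \<in> V)
     \<and> (\<forall>v w. E v w \<longrightarrow> E w v) \<and> (\<forall>v. \<not> E v v)"

definition walk :: "('a \<Rightarrow> 'a \<Rightarrow> bool) \<Rightarrow> 'a \<Rightarrow> 'a \<Rightarrow> nat \<Rightarrow> bool" where
  "walk E x y n \<longleftrightarrow> (\<exists>p::nat \<Rightarrow> 'a. p 0 = x \<and> p n = y \<and> (\<forall>i<n. E (p i) (p (Suc i))))"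

definition graph_connected :: "'a set \<Rightarrow> ('a \<Rightarrow> 'a \<Rightarrow> bool) \<Rightarrow> bool" where
  "graph_connected V E \<longleftrightarrow> (\<forall>x\<in>V. \<forall>y\<in>V. \<exists>n. walk E x y n)"

text \<open>Combinatorial path distance (meaningful for connected graphs).\<close>
definition gdist :: "('a \<Rightarrow> 'a \<Rightarrow> bool) \<Rightarrow> 'a \<Rightarrow> 'a \<Rightarrow> nat" where
  "gdist E x y = (LEAST n. walk E x y n)"

definition lap :: "'a set \<Rightarrow> ('a \<Rightarrow> 'a \<Rightarrow> bool) \<Rightarrow> ('a \<Rightarrow> real) \<Rightarrow> 'a \<Rightarrow> real" where
  "lap V E f v = (\<Sum>w\<in>{w\<in>V. E v w}. f w - f v)"

definition psi_lap :: "'a set \<Rightarrow> ('a \<Rightarrow> 'a \<Rightarrow> bool) \<Rightarrow> (real \<Rightarrow> real) \<Rightarrow> ('a \<Rightarrow> real) \<Rightarrow> 'a \<Rightarrow> real" where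
  "psi_lap V E \<psi> f v = lap V E (\<lambda>w. \<psi> (f w / f v)) v"

definition psi_Omega :: "'a set \<Rightarrow> ('a \<Rightarrow> 'a \<Rightarrow> bool) \<Rightarrow> (real \<Rightarrow> real) \<Rightarrow> ('a \<Rightarrow> real) \<Rightarrow> 'a \<Rightarrow> real" where
  "psi_Omega V E \<psi> f v = lap V E (\<lambda>w. deriv \<psi> (f w / f v) * (f w / f v) *
        (lap V E f w / f w - lap V E f v / f v)) v"

definition psi_Gamma2 :: "'a set \<Rightarrow> ('a \<Rightarrow> 'a \<Rightarrow> bool) \<Rightarrow> (real \<Rightarrow> real) \<Rightarrow> ('a \<Rightarrow> real) \<Rightarrow> 'a \<Rightarrow> real" where
  "psi_Gamma2 V E \<psi> f v = (psi_Omega V E \<psi> f v + lap V E f v * psi_lap V E \<psi> f v / f v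
        - lap V E (\<lambda>w. f w * psi_lap V E \<psi> f w) v / f v) / 2"

text \<open>Curvature-dimension condition CD\<psi>(d,0).\<close>
definition CDpsi :: "'a set \<Rightarrow> ('a \<Rightarrow> 'a \<Rightarrow> bool) \<Rightarrow> (real \<Rightarrow> real) \<Rightarrow> real \<Rightarrow> bool" where
  "CDpsi V E \<psi> d \<longleftrightarrow> (\<forall>f. (\<forall>v\<in>V. f v > 0) \<longrightarrow>
      (\<forall>v\<in>V. psi_Gamma2 V E \<psi> f v \<ge> (1 / d) * (psi_lap V E \<psi> f v)\<^sup>2))"

definition psi_bar :: "(real \<Rightarrow> real) \<Rightarrow> real \<Rightarrow> real" where
  "psi_bar \<psi> x = deriv \<psi> 1 * (x - 1) - (\<psi> x - \<psi> 1)"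

text \<open>H_\<psi> < \<infinity>: the ratio (log x)^2 / psi_bar x is finite (psi_bar x > 0) for all x > 1
  and bounded above; in that case H_\<psi> is the (real) supremum.\<close>
definition H_psi_finite :: "(real \<Rightarrow> real) \<Rightarrow> bool" where
  "H_psi_finite \<psi> \<longleftrightarrow> (\<forall>x>1. psi_bar \<psi> x > 0) \<and>
      bdd_above ((\<lambda>x. (ln x)\<^sup>2 / psi_bar \<psi> x) ` {1<..})"

definition H_psi :: "(real \<Rightarrow> real) \<Rightarrow> real" where
  "H_psi \<psi> = (SUP x\<in>{1<..}. (ln x)\<^sup>2 / psi_bar \<psi> x)"

text \<open>Solution of the heat equation on V \<times> [0,\<infinity>), C^1 in t (one-sided at t = 0).\<close>
definition heat_solution :: "'a set \<Rightarrow> ('a \<Rightarrow> 'a \<Rightarrow> bool) \<Rightarrow> ('a \<Rightarrow> real \<Rightarrow> real) \<Rightarrow> bool" where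
  "heat_solution V E u \<longleftrightarrow>
     (\<forall>x\<in>V. \<forall>t\<ge>0. ((\<lambda>s. u x s) has_real_derivative lap V E (\<lambda>y. u y t) x) (at t within {0..}))
   \<and> (\<forall>x\<in>V. continuous_on {0..} (\<lambda>t. lap V E (\<lambda>y. u y t) x))"

end

theory Submission
  imports Defs
begin

text \<open>A parabolic minimum principle for \<open>t \<Delta>\<^sup>\<psi> u\<close>, combined with \<open>CD\<psi>(d,0)\<close>, gives the
  Li--Yau inequality \<open>t \<Delta>\<^sup>\<psi> u \<ge> -d/2\<close>. As
  \<open>\<Delta>u/u = \<Delta>\<^sup>\<psi> u + (\<Sum>w \<sim> v. psi_bar \<psi> (u(w)/u(v)))\<close>, where \<open>psi_bar \<psi> \<ge> 0\<close> by concavity,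
  the function \<open>ln u(x,t) + (d/2) ln t\<close> is nondecreasing in \<open>t\<close>, and for an edge \<open>x \<sim> y\<close> its
  time derivative at \<open>y\<close> dominates \<open>psi_bar \<psi> (u(x)/u(y)) \<ge> (ln (u(x)/u(y)))\<^sup>2 / H\<^sub>\<psi>\<close>.
  Comparison with the Riccati equation \<open>g' = -g\<^sup>2/H\<^sub>\<psi>\<close> then bounds its decrease from
  \<open>(x,s)\<close> to \<open>(y,s')\<close> by \<open>H\<^sub>\<psi>/(s' - s)\<close>; chaining along a shortest path, with the time
  interval split evenly among the edges, gives \<open>H\<^sub>\<psi> dist\<^sup>2/(T\<^sub>2 - T\<^sub>1)\<close>.\<close>

definition nbrs :: "'a set \<Rightarrow> ('a \<Rightarrow> 'a \<Rightarrow> bool) \<Rightarrow> 'a \<Rightarrow> 'a set" where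
  "nbrs V E v = {w \<in> V. E v w}"

lemma lap_nbrs: "lap V E f v = (\<Sum>w\<in>nbrs V E v. f w - f v)"
  by (simp add: lap_def nbrs_def)

lemma psi_bar_nonneg:
  fixes \<psi> :: "real \<Rightarrow> real"
  assumes concave: "concave_on {0<..} \<psi>" and diff: "\<psi> differentiable (at 1)" and x: "x > 0"
  shows "psi_bar \<psi> x \<ge> 0"
proof -
  have convex: "convex_on {0<..} (\<lambda>x. - \<psi> x)"
    using concave by (simp add: concave_on_def)
  have tangent: "((\<lambda>x. - \<psi> x) has_field_derivative - deriv \<psi> 1) (at 1 within {0<..})"
    using diff
    by (intro has_field_derivative_at_within[OF DERIV_minus])
      (simp add: DERIV_deriv_iff_real_differentiable)
  have "- \<psi> x - - \<psi> 1 \<ge> - deriv \<psi> 1 * (x - 1)"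
    by (rule convex_on_imp_above_tangent[OF convex _ _ _ tangent]) (use x in \<open>auto simp: interior_open\<close>)
  then show ?thesis
    by (simp add: psi_bar_def)
qed

lemma psi_bar_pos:
  "H_psi_finite \<psi> \<Longrightarrow> x > 1 \<Longrightarrow> psi_bar \<psi> x > 0"
  by (simp add: H_psi_finite_def)

lemma H_psi_bound:
  assumes "H_psi_finite \<psi>" and "x > 1"
  shows "(ln x)\<^sup>2 \<le> H_psi \<psi> * psi_bar \<psi> x"
proof -
  have "(ln x)\<^sup>2 / psi_bar \<psi> x \<le> H_psi \<psi>"
    using assms unfolding H_psi_def H_psi_finite_def by (intro cSUP_upper) simp_all
  then show ?thesis
    using psi_bar_pos[OF assms] by (simp add: divide_le_eq mult.commute)
qed

lemma H_psi_pos: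
  assumes "H_psi_finite \<psi>"
  shows "H_psi \<psi> > 0"
proof -
  have "0 < (ln (2::real))\<^sup>2" by simp
  also have "\<dots> \<le> H_psi \<psi> * psi_bar \<psi> 2"
    using H_psi_bound[OF assms] by simp
  finally show ?thesis
    using psi_bar_pos[OF assms, of 2] by (simp add: zero_less_mult_iff)
qed

lemma lap_div_eq_psi_lap_add_psi_bar:
  assumes "deriv \<psi> 1 = 1" and "f v \<noteq> 0"
  shows "lap V E f v / f v = psi_lap V E \<psi> f v + (\<Sum>w\<in>nbrs V E v. psi_bar \<psi> (f w / f v))"
proof -
  have "psi_lap V E \<psi> f v + (\<Sum>w\<in>nbrs V E v. psi_bar \<psi> (f w / f v))
      = (\<Sum>w\<in>nbrs V E v. f w / f v - 1)"
    unfolding psi_lap_def lap_nbrs sum.distrib[symmetric]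
    using assms by (intro sum.cong) (auto simp: psi_bar_def)
  also have "\<dots> = lap V E f v / f v"
    unfolding lap_nbrs sum_divide_distrib
    using assms by (intro sum.cong) (auto simp: field_simps)
  finally show ?thesis by simp
qed

lemma CDpsi_Omega_ge:
  assumes CD: "CDpsi V E \<psi> d" and pos: "\<forall>w\<in>V. f w > 0" and v: "v \<in> V"
  shows "psi_Omega V E \<psi> f v \<ge> 2 / d * (psi_lap V E \<psi> f v)\<^sup>2
           + (\<Sum>w\<in>nbrs V E v. f w * (psi_lap V E \<psi> f w - psi_lap V E \<psi> f v)) / f v"
proof -
  let ?\<Phi> = "psi_lap V E \<psi> f"
  have sum_eq: "lap V E (\<lambda>w. f w * ?\<Phi> w) v - lap V E f v * ?\<Phi> v
      = (\<Sum>w\<in>nbrs V E v. f w * (?\<Phi> w - ?\<Phi> v))"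
    unfolding lap_nbrs sum_distrib_right sum_subtractf[symmetric]
    by (intro sum.cong) (auto simp: algebra_simps)
  have "psi_Gamma2 V E \<psi> f v \<ge> (1 / d) * (?\<Phi> v)\<^sup>2"
    using CD pos v unfolding CDpsi_def by blast
  then have "2 / d * (?\<Phi> v)\<^sup>2 + lap V E (\<lambda>w. f w * ?\<Phi> w) v / f v
      \<le> psi_Omega V E \<psi> f v + lap V E f v * ?\<Phi> v / f v"
    using pos v unfolding psi_Gamma2_def by (simp add: field_simps)
  then show ?thesis
    unfolding sum_eq[symmetric] diff_divide_distrib by linarith
qed

lemma CDpsi_Omega_ge_at_min:
  assumes CD: "CDpsi V E \<psi> d" and pos: "\<forall>w\<in>V. f w > 0" and v: "v \<in> V"
    and min: "\<And>w. w \<in> V \<Longrightarrow> psi_lap V E \<psi> f v \<le> psi_lap V E \<psi> f w"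
  shows "psi_Omega V E \<psi> f v \<ge> 2 / d * (psi_lap V E \<psi> f v)\<^sup>2"
proof -
  have "(\<Sum>w\<in>nbrs V E v. f w * (psi_lap V E \<psi> f w - psi_lap V E \<psi> f v)) / f v \<ge> 0"
    using pos v min by (intro divide_nonneg_pos sum_nonneg) (auto simp: nbrs_def)
  then show ?thesis
    using CDpsi_Omega_ge[OF CD pos v] by linarith
qed

lemma psi_lap_has_derivative_psi_Omega:
  fixes f :: "'a \<Rightarrow> real \<Rightarrow> real"
  assumes psi_diff: "\<forall>x>0. \<psi> differentiable (at x)"
    and heat: "\<And>w. w \<in> V \<Longrightarrow> (f w has_real_derivative lap V E (\<lambda>y. f y t) w) (at t within S)"
    and pos: "\<And>w. w \<in> V \<Longrightarrow> f w t > 0" and v: "v \<in> V"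
  shows "((\<lambda>s. psi_lap V E \<psi> (\<lambda>y. f y s) v) has_real_derivative
           psi_Omega V E \<psi> (\<lambda>y. f y t) v) (at t within S)"
proof -
  let ?\<Delta> = "lap V E (\<lambda>y. f y t)"
  define D where "D w = deriv \<psi> (f w t / f v t) * (f w t / f v t) * (?\<Delta> w / f w t - ?\<Delta> v / f v t)"
    for w
  have ratio: "((\<lambda>s. \<psi> (f w s / f v s)) has_real_derivative D w) (at t within S)"
    if w: "w \<in> V" for w
  proof -
    have "((\<lambda>s. f w s / f v s) has_real_derivative
        (?\<Delta> w * f v t - f w t * ?\<Delta> v) / (f v t * f v t)) (at t within S)"
      using heat[OF w] heat[OF v] pos[OF v] by (intro DERIV_divide) auto
    moreover have "(\<psi> has_real_derivative deriv \<psi> (f w t / f v t)) (at (f w t / f v t))"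
      using psi_diff pos[OF w] pos[OF v] by (simp add: DERIV_deriv_iff_real_differentiable)
    ultimately have "((\<lambda>s. \<psi> (f w s / f v s)) has_real_derivative
        deriv \<psi> (f w t / f v t) * ((?\<Delta> w * f v t - f w t * ?\<Delta> v) / (f v t * f v t)))
        (at t within S)"
      by (rule DERIV_chain2[rotated])
    then show ?thesis
      by (rule DERIV_cong) (use pos[OF w] pos[OF v] in \<open>simp add: D_def field_simps\<close>)
  qed
  have "((\<lambda>s. \<Sum>w\<in>nbrs V E v. \<psi> (f w s / f v s) - \<psi> (f v s / f v s)) has_real_derivative
      (\<Sum>w\<in>nbrs V E v. D w - D v)) (at t within S)"
    using v by (intro DERIV_sum DERIV_diff ratio) (auto simp: nbrs_def)
  moreover have "(\<Sum>w\<in>nbrs V E v. D w - D v) = psi_Omega V E \<psi> (\<lambda>y. f y t) v"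
    by (simp add: psi_Omega_def lap_nbrs D_def)
  ultimately show ?thesis
    by (simp add: psi_lap_def lap_nbrs)
qed

lemma finite_family_attains_inf:
  fixes F :: "'a \<Rightarrow> 'b::topological_space \<Rightarrow> real"
  assumes "finite V" "V \<noteq> {}" "compact K" "K \<noteq> {}"
    and "\<And>w. w \<in> V \<Longrightarrow> continuous_on K (F w)"
  obtains v0 t0 where "v0 \<in> V" "t0 \<in> K" "\<And>w s. w \<in> V \<Longrightarrow> s \<in> K \<Longrightarrow> F v0 t0 \<le> F w s"
proof -
  have "compact (\<Union>w\<in>V. F w ` K)"
    using assms by (intro compact_UN compact_continuous_image) auto
  then obtain m where "m \<in> (\<Union>w\<in>V. F w ` K)" "\<forall>y\<in>(\<Union>w\<in>V. F w ` K). m \<le> y"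
    using compact_attains_inf[of "\<Union>w\<in>V. F w ` K"] assms by auto
  then show thesis
    using that by auto
qed

lemma has_real_derivative_nonpos_at_left_min:
  fixes f :: "real \<Rightarrow> real"
  assumes has_deriv: "(f has_real_derivative D) (at x within {a..x})" and "a < x"
    and min: "\<And>y. a \<le> y \<Longrightarrow> y \<le> x \<Longrightarrow> f x \<le> f y"
  shows "D \<le> 0"
proof (rule ccontr)
  assume "\<not> D \<le> 0"
  then obtain \<delta> where "\<delta> > 0" and dec: "\<forall>h>0. x - h \<in> {a..x} \<longrightarrow> h < \<delta> \<longrightarrow> f (x - h) < f x"
    using has_real_derivative_pos_inc_left[OF has_deriv] by auto
  define h where "h = min (\<delta> / 2) (x - a)"
  have "f (x - h) < f x"
    using dec \<open>\<delta> > 0\<close> \<open>a < x\<close> by (auto simp: h_def)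
  moreover have "f x \<le> f (x - h)"
    using \<open>\<delta> > 0\<close> \<open>a < x\<close> by (intro min) (auto simp: h_def)
  ultimately show False
    by simp
qed

lemma riccati_comparison:
  fixes p p' :: "real \<Rightarrow> real"
  assumes "s < s'" and "H > 0"
    and has_deriv: "\<And>t. t \<in> {s..s'} \<Longrightarrow> (p has_real_derivative p' t) (at t)"
    and nonneg: "\<And>t. t \<in> {s..s'} \<Longrightarrow> p' t \<ge> 0"
    and riccati: "\<And>t. t \<in> {s..s'} \<Longrightarrow> a - p t > 0 \<Longrightarrow> (a - p t)\<^sup>2 \<le> H * p' t"
  shows "a - p s' \<le> H / (s' - s)"
proof (cases "a - p s' > 0")
  case False
  then show ?thesis
    using assms by (smt (verit) divide_pos_pos)
next
  case True
  have pos: "a - p t > 0" if t: "t \<in> {s..s'}" for t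
  proof -
    have "p t \<le> p s'"
      using t by (intro deriv_nonneg_imp_mono[of t s' p p'] has_deriv nonneg) auto
    then show ?thesis
      using True by linarith
  qed
  define K where "K t = inverse (a - p t) - t / H" for t
  have "K s \<le> K s'"
  proof (rule deriv_nonneg_imp_mono[of s s' K "\<lambda>t. p' t * inverse ((a - p t)\<^sup>2) - 1 / H"])
    fix t assume t: "t \<in> {s..s'}"
    show "(K has_real_derivative p' t * inverse ((a - p t)\<^sup>2) - 1 / H) (at t)"
      unfolding K_def using has_deriv[OF t] pos[OF t] \<open>H > 0\<close>
      by (auto intro!: derivative_eq_intros simp: power2_eq_square)
    show "p' t * inverse ((a - p t)\<^sup>2) - 1 / H \<ge> 0"
      using riccati[OF t pos[OF t]] pos[OF t] \<open>H > 0\<close> by (simp add: field_simps)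
  qed (use \<open>s < s'\<close> in simp)
  then have "(s' - s) / H + inverse (a - p s) \<le> inverse (a - p s')"
    by (simp add: K_def diff_divide_distrib)
  moreover have "inverse (a - p s) > 0"
    using pos[of s] \<open>s < s'\<close> by simp
  ultimately have "(s' - s) / H < inverse (a - p s')"
    by linarith
  then show ?thesis
    using True \<open>s < s'\<close> \<open>H > 0\<close> by (simp add: field_simps)
qed

lemma walk_0: "walk E x y 0 \<longleftrightarrow> x = y"
  by (auto simp: walk_def)

lemma walk_SucE:
  assumes "walk E x y (Suc n)"
  obtains z where "walk E x z n" "E z y"
  using assms unfolding walk_def by (metis less_Suc_eq)

lemma walk_chain_bound:
  fixes P :: "'a \<Rightarrow> real \<Rightarrow> real"
  assumes mono: "\<And>s s'. 0 < s \<Longrightarrow> s \<le> s' \<Longrightarrow> P x s \<le> P x s'"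
    and edge: "\<And>v w s s'. E v w \<Longrightarrow> 0 < s \<Longrightarrow> s < s' \<Longrightarrow> P v s - P w s' \<le> H / (s' - s)"
    and "walk E x y n" "0 < s" "s < s'"
  shows "P x s - P y s' \<le> H * (real n)\<^sup>2 / (s' - s)"
  using assms(3-)
proof (induction n arbitrary: y s')
  case 0
  then show ?case
    using mono[of s s'] by (simp add: walk_0)
next
  case (Suc n)
  obtain z where z: "walk E x z n" "E z y"
    using Suc.prems(1) by (rule walk_SucE)
  show ?case
  proof (cases "n = 0")
    case True
    then show ?thesis
      using z edge[OF z(2) Suc.prems(2,3)] by (simp add: walk_0)
  next
    case False
    define r where "r = s + (s' - s) * n / (n + 1)"
    have rs: "r - s = (s' - s) * n / (n + 1)" and sr: "s' - r = (s' - s) / (n + 1)"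
      by (simp_all add: r_def field_simps)
    have "(s' - s) * n / (n + 1) > 0" "(s' - s) / (n + 1) > 0"
      using Suc.prems False by simp_all
    then have "s < r" "r < s'"
      using rs sr by linarith+
    have "P x s - P y s' = (P x s - P z r) + (P z r - P y s')"
      by simp
    also have "\<dots> \<le> H * (real n)\<^sup>2 / (r - s) + H / (s' - r)"
      using Suc.IH[OF z(1) Suc.prems(2) \<open>s < r\<close>] edge[OF z(2) _ \<open>r < s'\<close>] \<open>s < r\<close> Suc.prems(2)
      by (intro add_mono) auto
    also have "\<dots> = H * n * (n + 1) / (s' - s) + H * (n + 1) / (s' - s)"
      using False unfolding rs sr by (simp add: power2_eq_square)
    also have "\<dots> = H * (real (Suc n))\<^sup>2 / (s' - s)"
      by (simp add: power2_eq_square add_divide_distrib[symmetric] algebra_simps)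
    finally show ?thesis .
  qed
qed

locale CDpsi_heat_flow =
  fixes \<psi> :: "real \<Rightarrow> real" and d :: real
    and V :: "'a set" and E :: "'a \<Rightarrow> 'a \<Rightarrow> bool" and u :: "'a \<Rightarrow> real \<Rightarrow> real"
  assumes psi_diff: "\<forall>x>0. \<psi> differentiable (at x)"
    and psi_concave: "concave_on {0<..} \<psi>"
    and psi_norm: "deriv \<psi> 1 = 1"
    and H_fin: "H_psi_finite \<psi>"
    and d_pos: "d > 0"
    and graph: "finite_graph V E"
    and CD: "CDpsi V E \<psi> d"
    and heat: "heat_solution V E u"
    and u_pos: "\<forall>x\<in>V. \<forall>t\<ge>0. u x t > 0"
begin

abbreviation \<Phi> :: "'a \<Rightarrow> real \<Rightarrow> real" where
  "\<Phi> v t \<equiv> psi_lap V E \<psi> (\<lambda>y. u y t) v"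

lemma edge_in_V: "E v w \<Longrightarrow> v \<in> V \<and> w \<in> V"
  using graph by (simp add: finite_graph_def)

lemma u_pos_at: "x \<in> V \<Longrightarrow> t \<ge> 0 \<Longrightarrow> u x t > 0"
  using u_pos by simp

lemma u_has_derivative: "x \<in> V \<Longrightarrow> t \<ge> 0 \<Longrightarrow>
    (u x has_real_derivative lap V E (\<lambda>y. u y t) x) (at t within {0..})"
  using heat by (simp add: heat_solution_def)

lemma psi_bar_ratio_nonneg: "v \<in> V \<Longrightarrow> w \<in> V \<Longrightarrow> t \<ge> 0 \<Longrightarrow> psi_bar \<psi> (u w t / u v t) \<ge> 0"
  using psi_diff u_pos by (intro psi_bar_nonneg psi_concave) auto

lemma Phi_has_derivative:
  assumes "v \<in> V" and "t \<ge> 0"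
  shows "((\<lambda>s. \<Phi> v s) has_real_derivative psi_Omega V E \<psi> (\<lambda>y. u y t) v) (at t within {0..})"
  using assms u_pos by (intro psi_lap_has_derivative_psi_Omega psi_diff u_has_derivative) auto

lemma continuous_on_time_Phi:
  assumes "v \<in> V"
  shows "continuous_on {0..T} (\<lambda>s. s * \<Phi> v s)"
proof -
  have "continuous_on {0..} (\<lambda>s. \<Phi> v s)"
    using Phi_has_derivative[OF assms]
    by (intro continuous_on_eq_continuous_within[THEN iffD2] ballI DERIV_continuous) auto
  then show ?thesis
    by (intro continuous_intros) (auto elim: continuous_on_subset)
qed

theorem Li_Yau:
  assumes v: "v \<in> V" and t: "t > 0"
  shows "- d / 2 \<le> t * \<Phi> v t"
proof (rule ccontr)
  assume "\<not> - d / 2 \<le> t * \<Phi> v t"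
  obtain v0 t0 where v0: "v0 \<in> V" and t0: "t0 \<in> {0..t}"
    and min: "\<And>w s. w \<in> V \<Longrightarrow> s \<in> {0..t} \<Longrightarrow> t0 * \<Phi> v0 t0 \<le> s * \<Phi> w s"
    using finite_family_attains_inf[of V "{0..t}" "\<lambda>w s. s * \<Phi> w s"] v t graph
      continuous_on_time_Phi by (auto simp: finite_graph_def)
  have below: "t0 * \<Phi> v0 t0 < - d / 2"
    using min[OF v, of t] t \<open>\<not> - d / 2 \<le> t * \<Phi> v t\<close> by auto
  then have "t0 > 0"
    using t0 d_pos by (cases "t0 = 0") auto
  have "t0 * \<Phi> v0 t0 < 0"
    using below d_pos by linarith
  then have "\<Phi> v0 t0 < 0"
    using \<open>t0 > 0\<close> by (simp add: mult_less_0_iff)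
  let ?\<Omega> = "psi_Omega V E \<psi> (\<lambda>y. u y t0) v0"
  have CD_min: "?\<Omega> \<ge> 2 / d * (\<Phi> v0 t0)\<^sup>2"
  proof (rule CDpsi_Omega_ge_at_min[OF CD _ v0])
    show "\<forall>w\<in>V. u w t0 > 0"
      using u_pos \<open>t0 > 0\<close> by auto
    show "\<Phi> v0 t0 \<le> \<Phi> w t0" if "w \<in> V" for w
      using min[OF that, of t0] t0 \<open>t0 > 0\<close> by simp
  qed
  have "\<Phi> v0 t0 + ?\<Omega> * t0 \<le> 0"
  proof (rule has_real_derivative_nonpos_at_left_min[OF _ \<open>t0 > 0\<close>])
    have "((\<lambda>s. s * \<Phi> v0 s) has_real_derivative \<Phi> v0 t0 + ?\<Omega> * t0) (at t0 within {0..})"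
      using DERIV_mult[OF DERIV_ident Phi_has_derivative[OF v0, of t0]] \<open>t0 > 0\<close> by simp
    then show "((\<lambda>s. s * \<Phi> v0 s) has_real_derivative \<Phi> v0 t0 + ?\<Omega> * t0) (at t0 within {0..t0})"
      by (rule DERIV_subset) auto
    show "t0 * \<Phi> v0 t0 \<le> s * \<Phi> v0 s" if "0 \<le> s" "s \<le> t0" for s
      using min[OF v0] that t0 by auto
  qed
  moreover have "- \<Phi> v0 t0 < ?\<Omega> * t0"
  proof -
    have "- \<Phi> v0 t0 = 2 / d * (- d / 2) * \<Phi> v0 t0"
      using d_pos by simp
    also have "\<dots> < 2 / d * (t0 * \<Phi> v0 t0) * \<Phi> v0 t0"
      using below \<open>\<Phi> v0 t0 < 0\<close> d_pos
      by (intro mult_strict_right_mono_neg mult_strict_left_mono) auto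
    also have "\<dots> = 2 / d * (\<Phi> v0 t0)\<^sup>2 * t0"
      by (simp add: power2_eq_square)
    also have "\<dots> \<le> ?\<Omega> * t0"
      using CD_min \<open>t0 > 0\<close> by (intro mult_right_mono) auto
    finally show ?thesis .
  qed
  ultimately show False
    by linarith
qed

definition harnack_log :: "'a \<Rightarrow> real \<Rightarrow> real" where
  "harnack_log x t = ln (u x t) + d / 2 * ln t"

lemma harnack_log_has_derivative:
  assumes x: "x \<in> V" and t: "t > 0"
  shows "(harnack_log x has_real_derivative lap V E (\<lambda>y. u y t) x / u x t + d / (2 * t)) (at t)"
proof -
  have "u x t > 0"
    using u_pos_at x t by simp
  have "(u x has_real_derivative lap V E (\<lambda>y. u y t) x) (at t)"
    using u_has_derivative[OF x less_imp_le[OF t]] at_within_interior[of t "{0..}"] t by simp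
  from DERIV_add[OF DERIV_chain2[OF DERIV_ln_divide[OF \<open>u x t > 0\<close>] this]
      DERIV_cmult[OF DERIV_ln_divide[OF t]]]
  show ?thesis
    unfolding harnack_log_def[abs_def] by (rule DERIV_cong) simp
qed

lemma harnack_log_deriv_ge:
  assumes x: "x \<in> V" and t: "t > 0"
  shows "(\<Sum>w\<in>nbrs V E x. psi_bar \<psi> (u w t / u x t)) \<le> lap V E (\<lambda>y. u y t) x / u x t + d / (2 * t)"
proof -
  have "0 \<le> \<Phi> x t + d / (2 * t)"
    using Li_Yau[OF x t] t by (simp add: field_simps)
  moreover have "u x t \<noteq> 0"
    using u_pos_at[OF x] t by (simp add: less_imp_neq[symmetric])
  ultimately show ?thesis
    using lap_div_eq_psi_lap_add_psi_bar[OF psi_norm, of "\<lambda>y. u y t" x V E] by linarith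
qed

lemma harnack_log_mono:
  assumes x: "x \<in> V" and "0 < s" "s \<le> s'"
  shows "harnack_log x s \<le> harnack_log x s'"
proof (rule deriv_nonneg_imp_mono[OF harnack_log_has_derivative[OF x]])
  fix t assume "t \<in> {s..s'}"
  then have "t > 0"
    using \<open>0 < s\<close> by simp
  have "0 \<le> (\<Sum>w\<in>nbrs V E x. psi_bar \<psi> (u w t / u x t))"
    using x \<open>t > 0\<close> by (intro sum_nonneg psi_bar_ratio_nonneg) (auto simp: nbrs_def)
  then show "0 \<le> lap V E (\<lambda>y. u y t) x / u x t + d / (2 * t)"
    using harnack_log_deriv_ge[OF x \<open>t > 0\<close>] by linarith
qed (use assms in auto)

lemma harnack_log_edge:
  assumes xy: "E x y" and "0 < s" "s < s'"
  shows "harnack_log x s - harnack_log y s' \<le> H_psi \<psi> / (s' - s)"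
proof (rule riccati_comparison[OF \<open>s < s'\<close> H_psi_pos[OF H_fin]])
  have x: "x \<in> V" and y: "y \<in> V"
    using edge_in_V[OF xy] by auto
  have x_nbr: "x \<in> nbrs V E y"
    using xy x graph by (simp add: nbrs_def finite_graph_def)
  fix t assume "t \<in> {s..s'}"
  then have "t > 0"
    using \<open>0 < s\<close> by simp
  let ?p' = "lap V E (\<lambda>z. u z t) y / u y t + d / (2 * t)"
  show "(harnack_log y has_real_derivative ?p') (at t)"
    by (rule harnack_log_has_derivative[OF y \<open>t > 0\<close>])
  have psi_bar_le: "psi_bar \<psi> (u w t / u y t) \<le> ?p'" if "w \<in> nbrs V E y" for w
  proof -
    have "psi_bar \<psi> (u w t / u y t) \<le> (\<Sum>w\<in>nbrs V E y. psi_bar \<psi> (u w t / u y t))"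
      using that y \<open>t > 0\<close> graph
      by (intro member_le_sum psi_bar_ratio_nonneg) (auto simp: nbrs_def finite_graph_def)
    then show ?thesis
      using harnack_log_deriv_ge[OF y \<open>t > 0\<close>] by linarith
  qed
  show "0 \<le> ?p'"
    using psi_bar_le[OF x_nbr] psi_bar_ratio_nonneg[OF y x less_imp_le[OF \<open>t > 0\<close>]] by linarith
  assume gap: "harnack_log x s - harnack_log y t > 0"
  define r where "r = u x t / u y t"
  have "u x t > 0" "u y t > 0"
    using u_pos_at x y \<open>t > 0\<close> by simp_all
  then have "ln r = harnack_log x t - harnack_log y t"
    by (simp add: r_def harnack_log_def ln_div)
  moreover have "harnack_log x s \<le> harnack_log x t"
    using harnack_log_mono[OF x \<open>0 < s\<close>] \<open>t \<in> {s..s'}\<close> by simp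
  ultimately have ln_r: "harnack_log x s - harnack_log y t \<le> ln r"
    by linarith
  have "ln r > 0"
    using ln_r gap by linarith
  moreover have "r > 0"
    using \<open>u x t > 0\<close> \<open>u y t > 0\<close> by (simp add: r_def)
  ultimately have "r > 1"
    using ln_gt_zero_iff by blast
  have "(harnack_log x s - harnack_log y t)\<^sup>2 \<le> (ln r)\<^sup>2"
    using ln_r gap by (intro power_mono) auto
  also have "\<dots> \<le> H_psi \<psi> * psi_bar \<psi> r"
    by (rule H_psi_bound[OF H_fin \<open>r > 1\<close>])
  also have "\<dots> \<le> H_psi \<psi> * ?p'"
    using psi_bar_le[OF x_nbr] H_psi_pos[OF H_fin] by (simp add: r_def)
  finally show "(harnack_log x s - harnack_log y t)\<^sup>2 \<le> H_psi \<psi> * ?p'" .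
qed

end

theorem mainTheorem11:
  fixes \<psi> :: "real \<Rightarrow> real" and d :: real
    and V :: "'a set" and E :: "'a \<Rightarrow> 'a \<Rightarrow> bool" and u :: "'a \<Rightarrow> real \<Rightarrow> real"
    and x1 x2 :: 'a and T1 T2 :: real
  assumes psi_diff: "\<forall>x>0. \<psi> differentiable (at x)"
    and psi_C1: "continuous_on {0<..} (deriv \<psi>)"
    and psi_concave: "concave_on {0<..} \<psi>"
    and psi_norm: "deriv \<psi> 1 = 1"
    and H_fin: "H_psi_finite \<psi>"
    and d_pos: "d > 0"
    and graph: "finite_graph V E"
    and conn: "graph_connected V E"
    and CD: "CDpsi V E \<psi> d"
    and heat: "heat_solution V E u"
    and u_pos: "\<forall>x\<in>V. \<forall>t\<ge>0. u x t > 0"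
    and x1: "x1 \<in> V" and x2: "x2 \<in> V"
    and T: "0 < T1" "T1 < T2"
  shows "ln (u x1 T1 / u x2 T2) \<le> d / 2 * ln (T2 / T1)
           + H_psi \<psi> * (real (gdist E x1 x2))\<^sup>2 / (T2 - T1)"
proof -
  interpret CDpsi_heat_flow \<psi> d V E u
    using psi_diff psi_concave psi_norm H_fin d_pos graph CD heat u_pos by unfold_locales
  have "\<exists>n. walk E x1 x2 n"
    using conn x1 x2 by (simp add: graph_connected_def)
  then have "walk E x1 x2 (gdist E x1 x2)"
    unfolding gdist_def by (rule LeastI_ex)
  then have "harnack_log x1 T1 - harnack_log x2 T2 \<le> H_psi \<psi> * (real (gdist E x1 x2))\<^sup>2 / (T2 - T1)"
    using T by (intro walk_chain_bound[where P = harnack_log] harnack_log_mono[OF x1] harnack_log_edge)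
  moreover have "ln (u x1 T1 / u x2 T2) = ln (u x1 T1) - ln (u x2 T2)"
    using u_pos_at[OF x1, of T1] u_pos_at[OF x2, of T2] T by (simp add: ln_div)
  moreover have "d / 2 * ln (T2 / T1) = d / 2 * ln T2 - d / 2 * ln T1"
    using T by (simp add: ln_div right_diff_distrib)
  ultimately show ?thesis
    unfolding harnack_log_def by linarith
qed

end
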